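(* Let $G=(V,E)$ be a graph with $n = |V| \ge \alpha$ nodes, let $\alpha,\beta>1$, $L=\lceil\log_\beta(n/\alpha)\rceil$, and let $\ell:V\to\{0,\dots,L\}$ be a level assignment with edge weights $w(u,v) = \beta^{-\max(\ell(u),\ell(v))}$ for $(u,v)\in E$ and node weights $W_v = \sum_{u \in \mathcal N_v} w(u,v)$ (where $\mathcal N_v$ is the neighbor set of $v$). Suppose that for every $v\in V$: if $\ell(v)=0$ then $W_v\le\alpha\beta$, and if $\ell(v)\ge 1$ then $1\le W_v\le \alpha\beta$. Then $V^* = \{v\in V: W_v\ge 1\}$ is a vertex cover of $G$, and $|V^*|$ is at most $2\alpha\beta$ times the size of a minimum vertex cover of $G$.
   Context: A vertex cover of $G$ is a set of nodes containing at least one endpoint of every edge. *)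

theory Defs
  imports Complex_Main
begin

definition simple_graph :: "'a set \<Rightarrow> 'a set set \<Rightarrow> bool" where
  "simple_graph V E \<longleftrightarrow> finite V \<and> (\<forall>e\<in>E. e \<subseteq> V \<and> card e = 2)"

definition neighbors :: "'a set set \<Rightarrow> 'a \<Rightarrow> 'a set" where
  "neighbors E v = {u. {u, v} \<in> E}"

definition vertex_cover :: "'a set \<Rightarrow> 'a set set \<Rightarrow> 'a set \<Rightarrow> bool" where
  "vertex_cover V E C \<longleftrightarrow> C \<subseteq> V \<and> (\<forall>e\<in>E. e \<inter> C \<noteq> {})"

definition min_vertex_cover_size :: "'a set \<Rightarrow> 'a set set \<Rightarrow> nat" where
  "min_vertex_cover_size V E = Min (card ` {C. vertex_cover V E C})"

definition edge_weight :: "real \<Rightarrow> ('a \<Rightarrow> nat) \<Rightarrow> 'a \<Rightarrow> 'a \<Rightarrow> real" where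
  "edge_weight \<beta> lvl u v = \<beta> powr (- real (max (lvl u) (lvl v)))"

definition node_weight :: "'a set set \<Rightarrow> real \<Rightarrow> ('a \<Rightarrow> nat) \<Rightarrow> 'a \<Rightarrow> real" where
  "node_weight E \<beta> lvl v = (\<Sum>u\<in>neighbors E v. edge_weight \<beta> lvl u v)"

end

theory Submission
  imports Defs
begin

text \<open>An edge between two level-0 nodes has weight 1, so every edge has an endpoint of node
  weight at least 1. For the ratio, fix a minimum vertex cover C: the sum of all node weights counts
  every edge twice, and since every edge has an endpoint in C it is at most twice the sum of the node
  weights over C, hence at most 2 \<alpha> \<beta> |C|; every node of V* contributes at least 1 to it.\<close>

lemma neighbors_subset:
  assumes "simple_graph V E"
  shows "neighbors E v \<subseteq> V"
  using assms unfolding simple_graph_def neighbors_def by blast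

lemma finite_neighbors:
  assumes "simple_graph V E"
  shows "finite (neighbors E v)"
  using assms finite_subset[OF neighbors_subset[OF assms]] by (simp add: simple_graph_def)

lemma edge_weight_nonneg: "edge_weight \<beta> lvl u v \<ge> 0"
  unfolding edge_weight_def by simp

lemma edge_weight_commute: "edge_weight \<beta> lvl u v = edge_weight \<beta> lvl v u"
  unfolding edge_weight_def by (simp add: max.commute)

lemma edge_weight_level_0:
  assumes "\<beta> > 0" "lvl u = 0" "lvl v = 0"
  shows "edge_weight \<beta> lvl u v = 1"
  using assms unfolding edge_weight_def by simp

lemma node_weight_nonneg: "node_weight E \<beta> lvl v \<ge> 0"
  unfolding node_weight_def by (simp add: sum_nonneg edge_weight_nonneg)

lemma edge_weight_le_node_weight:
  assumes "simple_graph V E" "{u, v} \<in> E"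
  shows "edge_weight \<beta> lvl u v \<le> node_weight E \<beta> lvl v"
  unfolding node_weight_def
  using assms finite_neighbors[OF assms(1)]
  by (intro member_le_sum) (auto simp: neighbors_def edge_weight_nonneg)

lemma heavy_nodes_vertex_cover:
  assumes G: "simple_graph V E" and "\<beta> > 0"
    and heavy: "\<forall>v\<in>V. lvl v \<ge> 1 \<longrightarrow> 1 \<le> node_weight E \<beta> lvl v"
  shows "vertex_cover V E {v\<in>V. node_weight E \<beta> lvl v \<ge> 1}"
  unfolding vertex_cover_def
proof safe
  fix e assume e: "e \<in> E" and light: "e \<inter> {v\<in>V. 1 \<le> node_weight E \<beta> lvl v} = {}"
  from e G obtain u v where uv: "e = {u, v}" and "u \<in> V" "v \<in> V"
    unfolding simple_graph_def by (metis card_2_iff insert_subset)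
  with light have light_uv: "node_weight E \<beta> lvl u < 1" "node_weight E \<beta> lvl v < 1"
    by auto
  with heavy \<open>u \<in> V\<close> \<open>v \<in> V\<close> have "lvl u = 0" "lvl v = 0"
    by (meson less_one not_le)+
  with \<open>\<beta> > 0\<close> have "edge_weight \<beta> lvl u v = 1"
    by (rule edge_weight_level_0)
  moreover have "edge_weight \<beta> lvl u v \<le> node_weight E \<beta> lvl v"
    using G e uv by (intro edge_weight_le_node_weight) auto
  ultimately show False
    using light_uv by simp
qed

lemma min_vertex_cover_exists:
  assumes G: "simple_graph V E"
  obtains C where "vertex_cover V E C" "card C = min_vertex_cover_size V E"
proof -
  have finV: "finite V" using G unfolding simple_graph_def by simp
  have "{C. vertex_cover V E C} \<subseteq> Pow V" unfolding vertex_cover_def by auto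
  with finV have "finite (card ` {C. vertex_cover V E C})"
    by (meson finite_Pow_iff finite_imageI finite_subset)
  moreover have "vertex_cover V E V"
    using G unfolding simple_graph_def vertex_cover_def by (fastforce simp: Int_absorb2)
  ultimately show ?thesis
    using Min_in that unfolding min_vertex_cover_size_def by fastforce
qed

lemma sum_neighbors_eq_sum_vertices:
  assumes G: "simple_graph V E" and "v \<in> V"
  shows "(\<Sum>u\<in>neighbors E v. g u v) = (\<Sum>u\<in>V. if {u, v} \<in> E then g u v else 0)"
proof -
  have "(\<Sum>u\<in>V. if {u, v} \<in> E then g u v else 0) = (\<Sum>u\<in>neighbors E v. if {u, v} \<in> E then g u v else 0)"
    using G neighbors_subset[OF G]
    by (intro sum.mono_neutral_right) (auto simp: simple_graph_def neighbors_def)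
  also have "\<dots> = (\<Sum>u\<in>neighbors E v. g u v)"
    by (rule sum.cong) (auto simp: neighbors_def)
  finally show ?thesis by simp
qed

lemma sum_neighbor_weights_le_cover:
  fixes g :: "'a \<Rightarrow> 'a \<Rightarrow> real"
  assumes G: "simple_graph V E" and C: "vertex_cover V E C"
    and nonneg: "\<And>u v. g u v \<ge> 0" and commute: "\<And>u v. g u v = g v u"
  shows "(\<Sum>v\<in>V. \<Sum>u\<in>neighbors E v. g u v) \<le> 2 * (\<Sum>v\<in>C. \<Sum>u\<in>neighbors E v. g u v)"
proof -
  define f where "f u v = (if {u, v} \<in> E then g u v else 0)" for u v
  define h where "h v = (\<Sum>u\<in>V. f u v)" for v
  have finV: "finite V" and CV: "C \<subseteq> V"
    using G C unfolding simple_graph_def vertex_cover_def by auto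
  have f_commute: "f u v = f v u" for u v
    unfolding f_def by (simp add: commute insert_commute)
  have f_covered: "f u v \<le> (if u \<in> C then f u v else 0) + (if v \<in> C then f u v else 0)" for u v
    using C nonneg[of u v] unfolding f_def vertex_cover_def by fastforce
  have h_cover: "(\<Sum>v\<in>V. if v \<in> C then h v else 0) = (\<Sum>v\<in>C. h v)"
    using CV finV by (simp add: sum.If_cases Int_absorb1)
  have "(\<Sum>v\<in>V. \<Sum>u\<in>neighbors E v. g u v) = (\<Sum>v\<in>V. h v)"
    unfolding h_def f_def by (intro sum.cong refl sum_neighbors_eq_sum_vertices[OF G])
  also have "\<dots> \<le> (\<Sum>v\<in>V. \<Sum>u\<in>V. (if u \<in> C then f u v else 0) + (if v \<in> C then f u v else 0))"
    unfolding h_def by (intro sum_mono f_covered)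
  also have "\<dots> = (\<Sum>v\<in>V. \<Sum>u\<in>V. if u \<in> C then f u v else 0) + (\<Sum>v\<in>V. \<Sum>u\<in>V. if v \<in> C then f u v else 0)"
    by (simp only: sum.distrib)
  also have "(\<Sum>v\<in>V. \<Sum>u\<in>V. if u \<in> C then f u v else 0) = (\<Sum>u\<in>V. \<Sum>v\<in>V. if u \<in> C then f u v else 0)"
    by (rule sum.swap)
  also have "\<dots> = (\<Sum>u\<in>V. if u \<in> C then h u else 0)"
    unfolding h_def by (intro sum.cong) (auto simp: f_commute)
  also have "(\<Sum>v\<in>V. \<Sum>u\<in>V. if v \<in> C then f u v else 0) = (\<Sum>v\<in>V. if v \<in> C then h v else 0)"
    unfolding h_def by (intro sum.cong) auto
  also have "(\<Sum>u\<in>V. if u \<in> C then h u else 0) + (\<Sum>v\<in>V. if v \<in> C then h v else 0) = 2 * (\<Sum>v\<in>C. h v)"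
    unfolding h_cover by simp
  also have "(\<Sum>v\<in>C. h v) = (\<Sum>v\<in>C. \<Sum>u\<in>neighbors E v. g u v)"
    unfolding h_def f_def using CV by (intro sum.cong refl sum_neighbors_eq_sum_vertices[OF G, symmetric]) auto
  finally show ?thesis .
qed

lemma card_ge_1_le_sum:
  fixes f :: "'a \<Rightarrow> real"
  assumes "finite A" "\<And>x. x \<in> A \<Longrightarrow> f x \<ge> 0"
  shows "real (card {x\<in>A. f x \<ge> 1}) \<le> (\<Sum>x\<in>A. f x)"
proof -
  have "real (card {x\<in>A. f x \<ge> 1}) = (\<Sum>x\<in>{x\<in>A. f x \<ge> 1}. 1)" by simp
  also have "\<dots> \<le> (\<Sum>x\<in>{x\<in>A. f x \<ge> 1}. f x)" by (rule sum_mono) auto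
  also have "\<dots> \<le> (\<Sum>x\<in>A. f x)" using assms by (intro sum_mono2) auto
  finally show ?thesis .
qed

theorem theorem2p5:
  fixes V :: "'a set" and E :: "'a set set" and \<alpha> \<beta> :: real and lvl :: "'a \<Rightarrow> nat"
  assumes G: "simple_graph V E"
    and n_ge: "real (card V) \<ge> \<alpha>"
    and alpha: "\<alpha> > 1" and beta: "\<beta> > 1"
    and levels: "\<forall>v\<in>V. lvl v \<in> {0..nat \<lceil>log \<beta> (real (card V) / \<alpha>)\<rceil>}"
    and lvl0: "\<forall>v\<in>V. lvl v = 0 \<longrightarrow> node_weight E \<beta> lvl v \<le> \<alpha> * \<beta>"
    and lvl_pos: "\<forall>v\<in>V. lvl v \<ge> 1 \<longrightarrow> 1 \<le> node_weight E \<beta> lvl v \<and> node_weight E \<beta> lvl v \<le> \<alpha> * \<beta>"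
  shows "vertex_cover V E {v\<in>V. node_weight E \<beta> lvl v \<ge> 1}
    \<and> real (card {v\<in>V. node_weight E \<beta> lvl v \<ge> 1}) \<le> 2 * \<alpha> * \<beta> * real (min_vertex_cover_size V E)"
proof
  let ?W = "node_weight E \<beta> lvl"
  show "vertex_cover V E {v\<in>V. ?W v \<ge> 1}"
    using heavy_nodes_vertex_cover[OF G] beta lvl_pos by simp
  obtain C where C: "vertex_cover V E C" "card C = min_vertex_cover_size V E"
    using min_vertex_cover_exists[OF G] .
  have finV: "finite V" and CV: "C \<subseteq> V"
    using G C(1) unfolding simple_graph_def vertex_cover_def by auto
  have W_le: "?W v \<le> \<alpha> * \<beta>" if "v \<in> C" for v
    using lvl0 lvl_pos CV that by (cases "lvl v = 0") auto
  have "real (card {v\<in>V. ?W v \<ge> 1}) \<le> (\<Sum>v\<in>V. ?W v)"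
    using finV by (intro card_ge_1_le_sum node_weight_nonneg)
  also have "\<dots> \<le> 2 * (\<Sum>v\<in>C. ?W v)"
    using sum_neighbor_weights_le_cover[OF G C(1) edge_weight_nonneg edge_weight_commute]
    unfolding node_weight_def .
  also have "\<dots> \<le> 2 * (\<Sum>v\<in>C. \<alpha> * \<beta>)"
    using W_le by (intro mult_left_mono sum_mono) auto
  finally show "real (card {v\<in>V. ?W v \<ge> 1}) \<le> 2 * \<alpha> * \<beta> * real (min_vertex_cover_size V E)"
    using C(2) by (simp add: algebra_simps)
qed

end
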